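(* Let $\mu=\prod_{n=1}^\infty\nu_n$ be a $b$-biased probability measure on $[0,1]^{\mathbb{N}}$ with $b>0$. Then $\mu(\mathcal{C}_I)=1$; that is, for $\mu$-almost every sequence $(p_i)_{i=1}^\infty$ the Condorcet Jury Property holds.
   Context: For a sequence $(p_i)_{i=1}^\infty\in[0,1]^{\mathbb{N}}$ let $X_1,X_2,\dots$ be independent random variables with values in $\{0,1\}$ and $\mathbb{P}(X_i=1)=p_i$. The sequence satisfies the Condorcet Jury Property (CJP) if $\lim_{n\to\infty,\ n\text{ odd}}\mathbb{P}\left(\sum_{i=1}^n X_i>\frac n2\right)=1$; $\mathcal{C}_I$ is the set of such sequences. All measures are Borel probability measures; $\nu\ll\nu'$ denotes absolute continuity. Hellinger integral: $H(\nu,\nu')=\int_{[0,1]}\sqrt{\frac{d\nu}{d\tau}\frac{d\nu'}{d\tau}}\,d\tau$ for any $\tau$ with $\nu,\nu'\ll\tau$. Class $\mathcal{D}$: a divergence ($d\ge0$, $d(\nu,\nu')=0$ iff $\nu=\nu'$) or distance (metric) $d$ on probability measures on $[0,1]$ belongs to $\mathcal{D}$ if there is $C>0$ with $1-H(\nu,\nu')\le C\,d(\nu,\nu')$ for all $\nu,\nu'$. $b$-biased measure ($b\in[-\frac12,\frac12]$): a product measure $\mu=\prod_{n=1}^\infty\nu_n$ on $[0,1]^{\mathbb{N}}$ such that there is a probability measure $\nu_0$ on $[0,1]$ with $\nu_n\ll\nu_0$ for all $n\ge1$, $\int_{[0,1]}x\,d\nu_0(x)=\frac12+b$, and $\sum_{n=1}^\infty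 d(\nu_n,\nu_0)<\infty$ for some $d\in\mathcal{D}$. *)

theory Defs
  imports "HOL-Probability.Probability"
begin

definition pm01 :: "real measure \<Rightarrow> bool" where
  "pm01 \<nu> \<longleftrightarrow> prob_space \<nu> \<and> sets \<nu> = sets (restrict_space borel {0..1::real})"

definition sum_meas :: "real measure \<Rightarrow> real measure \<Rightarrow> real measure" where
  "sum_meas \<nu> \<nu>' = measure_of (space \<nu>) (sets \<nu>) (\<lambda>A. emeasure \<nu> A + emeasure \<nu>' A)"

definition hellinger :: "real measure \<Rightarrow> real measure \<Rightarrow> ennreal" where
  "hellinger \<nu> \<nu>' =
     (let \<tau> = sum_meas \<nu> \<nu>' in
      \<integral>\<^sup>+ x. ennreal (sqrt (enn2real (RN_deriv \<tau> \<nu> x) * enn2real (RN_deriv \<tau> \<nu>' x))) \<partial>\<tau>)"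

definition class_D :: "(real measure \<Rightarrow> real measure \<Rightarrow> ennreal) \<Rightarrow> bool" where
  "class_D d \<longleftrightarrow>
     (\<forall>\<nu> \<nu>'. pm01 \<nu> \<longrightarrow> pm01 \<nu>' \<longrightarrow> (d \<nu> \<nu>' = 0 \<longleftrightarrow> \<nu> = \<nu>')) \<and>
     (\<exists>C::real. C > 0 \<and> (\<forall>\<nu> \<nu>'. pm01 \<nu> \<longrightarrow> pm01 \<nu>' \<longrightarrow>
         1 - hellinger \<nu> \<nu>' \<le> ennreal C * d \<nu> \<nu>'))"

text \<open>b-biased product measure PiM UNIV nu (coordinates indexed by nat, starting at 0).\<close>
definition b_biased :: "(nat \<Rightarrow> real measure) \<Rightarrow> real \<Rightarrow> bool" where
  "b_biased \<nu> b \<longleftrightarrow> b \<in> {-1/2..1/2} \<and> (\<forall>n. pm01 (\<nu> n)) \<and>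
     (\<exists>\<nu>0 d. pm01 \<nu>0 \<and> (\<forall>n. absolutely_continuous \<nu>0 (\<nu> n)) \<and>
        (\<integral>x. x \<partial>\<nu>0) = 1/2 + b \<and> class_D d \<and> (\<Sum>n. d (\<nu> n) \<nu>0) < \<infinity>)"

text \<open>P(sum_{i<n} X_i > n/2) for independent Bernoulli(p i) variables.\<close>
definition maj_prob :: "(nat \<Rightarrow> real) \<Rightarrow> nat \<Rightarrow> real" where
  "maj_prob p n = (\<Sum>S\<in>{S. S \<subseteq> {..<n} \<and> 2 * card S > n}.
       (\<Prod>i\<in>S. p i) * (\<Prod>i\<in>{..<n} - S. 1 - p i))"

definition CJP :: "(nat \<Rightarrow> real) \<Rightarrow> bool" where
  "CJP p \<longleftrightarrow> (\<lambda>k. maj_prob p (2 * k + 1)) \<longlonglongrightarrow> 1"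

definition C_I :: "(nat \<Rightarrow> real) set" where
  "C_I = {p \<in> (\<Pi>\<^sub>E i\<in>UNIV. {0..1}). CJP p}"

end

theory Submission
  imports Defs
begin

(* For measures nu, nu' on [0,1] with densities f, g with respect to nu + nu', the pointwise
   inequality  g x + (2/e) sqrt (f g) <= f x + (e/2 + 1/e) (f + g)  integrates to
   mean nu' - mean nu <= e + (2/e) (1 - H(nu, nu')).  As 1 - H is dominated by the summable
   divergences d(nu_n, nu_0), the partial sums of the means of the nu_n eventually exceed
   (1/2 + b/2) n.  Hoeffding's inequality and Borel-Cantelli transfer this, with margin b/4, to
   almost every sample p, and for such p a Chernoff bound shows that the majority of 2k+1 voters
   errs with probability at most exp (-k delta^2 / (1 + delta)). *)

definition outcome_prob :: "(nat \<Rightarrow> real) \<Rightarrow> nat set \<Rightarrow> nat set \<Rightarrow> real" where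
  "outcome_prob p A S = (\<Prod>i\<in>S. p i) * (\<Prod>i\<in>A - S. 1 - p i)"

lemma outcome_prob_nonneg:
  assumes "\<And>i. i \<in> A \<Longrightarrow> p i \<in> {0..1}" and "S \<subseteq> A"
  shows "0 \<le> outcome_prob p A S"
  using assms unfolding outcome_prob_def by (intro mult_nonneg_nonneg prod_nonneg) auto

lemma sum_outcome_prob:
  assumes "finite A"
  shows "(\<Sum>S\<in>Pow A. outcome_prob p A S) = 1"
  using prod_add[OF assms, of p "\<lambda>i. 1 - p i"] by (simp add: outcome_prob_def)

lemma maj_prob_eq_1_minus_minority:
  "maj_prob p n = 1 - (\<Sum>S\<in>{S. S \<subseteq> {..<n} \<and> 2 * card S \<le> n}. outcome_prob p {..<n} S)"
proof -
  let ?maj = "{S. S \<subseteq> {..<n} \<and> 2 * card S > n}"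
  let ?min = "{S. S \<subseteq> {..<n} \<and> 2 * card S \<le> n}"
  have "Pow {..<n} = ?maj \<union> ?min"
    by auto
  then have "(\<Sum>S\<in>Pow {..<n}. outcome_prob p {..<n} S)
      = (\<Sum>S\<in>?maj. outcome_prob p {..<n} S) + (\<Sum>S\<in>?min. outcome_prob p {..<n} S)"
    by (simp only:) (rule sum.union_disjoint; auto)
  moreover have "maj_prob p n = (\<Sum>S\<in>?maj. outcome_prob p {..<n} S)"
    by (simp add: maj_prob_def outcome_prob_def)
  ultimately show ?thesis
    using sum_outcome_prob[of "{..<n}" p] by simp
qed

lemma maj_prob_le_1:
  assumes "\<And>i. p i \<in> {0..1}"
  shows "maj_prob p n \<le> 1"
  using assms by (simp add: maj_prob_eq_1_minus_minority) (intro sum_nonneg outcome_prob_nonneg; auto)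

(* Exponential tilting: y ^ (card S - k) >= 1 on the sets S with card S <= k. *)
lemma sum_outcome_prob_card_le:
  assumes "finite A" and p: "\<And>i. i \<in> A \<Longrightarrow> p i \<in> {0..1}" and y: "0 < y" "y \<le> 1"
  shows "(\<Sum>S\<in>{S. S \<subseteq> A \<and> card S \<le> k}. outcome_prob p A S)
      \<le> (1/y)^k * (\<Prod>i\<in>A. 1 - (1 - y) * p i)"
proof -
  have "outcome_prob p A S \<le> (1/y)^k * (\<Prod>i\<in>S. y * p i) * (\<Prod>i\<in>A - S. 1 - p i)"
    if "S \<subseteq> A" "card S \<le> k" for S
  proof -
    have "1 \<le> (1/y)^k * y ^ card S"
      using that y by (simp add: field_simps power_divide power_decreasing)
    moreover have "0 \<le> outcome_prob p A S"
      using p that(1) by (rule outcome_prob_nonneg)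
    ultimately have "outcome_prob p A S \<le> ((1/y)^k * y ^ card S) * outcome_prob p A S"
      using mult_right_mono by fastforce
    also have "\<dots> = (1/y)^k * (\<Prod>i\<in>S. y * p i) * (\<Prod>i\<in>A - S. 1 - p i)"
      by (simp add: outcome_prob_def prod.distrib)
    finally show ?thesis .
  qed
  then have "(\<Sum>S\<in>{S. S \<subseteq> A \<and> card S \<le> k}. outcome_prob p A S)
      \<le> (\<Sum>S\<in>{S. S \<subseteq> A \<and> card S \<le> k}. (1/y)^k * (\<Prod>i\<in>S. y * p i) * (\<Prod>i\<in>A - S. 1 - p i))"
    by (intro sum_mono) auto
  also have "\<dots> \<le> (\<Sum>S\<in>Pow A. (1/y)^k * (\<Prod>i\<in>S. y * p i) * (\<Prod>i\<in>A - S. 1 - p i))"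
    using assms
    by (intro sum_mono2 mult_nonneg_nonneg prod_nonneg) auto
  also have "\<dots> = (1/y)^k * (\<Prod>i\<in>A. 1 - (1 - y) * p i)"
    using prod_add[OF \<open>finite A\<close>, of "\<lambda>i. y * p i" "\<lambda>i. 1 - p i"]
    by (simp add: outcome_prob_def sum_distrib_left[symmetric] algebra_simps)
  finally show ?thesis .
qed

lemma prod_one_minus_le_exp_sum:
  fixes t :: "'a \<Rightarrow> real"
  assumes "finite A" and "\<And>i. i \<in> A \<Longrightarrow> t i \<le> 1"
  shows "(\<Prod>i\<in>A. 1 - t i) \<le> exp (- (\<Sum>i\<in>A. t i))"
proof -
  have "(\<Prod>i\<in>A. 1 - t i) \<le> (\<Prod>i\<in>A. exp (- t i))"
    using assms(2) exp_ge_add_one_self[of "- t _"] by (intro prod_mono) auto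
  then show ?thesis
    by (simp only: sum_negf[symmetric] exp_sum[OF \<open>finite A\<close>])
qed

lemma maj_prob_ge:
  fixes \<delta> :: real
  assumes p: "\<And>i. p i \<in> {0..1}" and \<delta>: "\<delta> > 0"
    and sum_ge: "(1 + 2*\<delta>) * k \<le> (\<Sum>i<2*k+1. p i)"
  shows "1 - exp (- \<delta>\<^sup>2 / (1 + \<delta>)) ^ k \<le> maj_prob p (2*k+1)"
proof -
  define y where "y = 1 / (1 + \<delta>)"
  define c where "c = \<delta> * (1 + 2*\<delta>) / (1 + \<delta>)"
  have y: "0 < y" "y \<le> 1" "1 - y = \<delta> / (1 + \<delta>)"
    using \<delta> by (auto simp: y_def field_simps)
  have weight_le_1: "(1 - y) * p i \<le> 1" for i
    using p[of i] y(1,2) by (intro mult_le_one) auto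
  have minority: "{S. S \<subseteq> {..<2*k+1} \<and> 2 * card S \<le> 2*k+1} = {S. S \<subseteq> {..<2*k+1} \<and> card S \<le> k}"
    by auto
  have "(\<Prod>i<2*k+1. 1 - (1 - y) * p i) \<le> exp (- (\<Sum>i<2*k+1. (1 - y) * p i))"
    using weight_le_1 by (intro prod_one_minus_le_exp_sum) auto
  also have "\<dots> \<le> exp (- c) ^ k"
  proof -
    have "c * k = (1 - y) * ((1 + 2*\<delta>) * k)"
      by (simp add: y(3) c_def)
    also have "\<dots> \<le> (\<Sum>i<2*k+1. (1 - y) * p i)"
      using mult_left_mono[OF sum_ge, of "1 - y"] y(2) by (simp only: sum_distrib_left)
    finally show ?thesis
      by (simp add: exp_of_nat_mult[symmetric] mult.commute)
  qed
  finally have prod_le: "(\<Prod>i<2*k+1. 1 - (1 - y) * p i) \<le> exp (- c) ^ k" .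
  have "(\<Sum>S\<in>{S. S \<subseteq> {..<2*k+1} \<and> 2 * card S \<le> 2*k+1}. outcome_prob p {..<2*k+1} S)
      \<le> (1 + \<delta>)^k * (\<Prod>i<2*k+1. 1 - (1 - y) * p i)"
    unfolding minority using sum_outcome_prob_card_le[of "{..<2*k+1}" p y k] p y by (simp add: y_def)
  also have "\<dots> \<le> exp \<delta> ^ k * exp (- c) ^ k"
    using \<delta> prod_le exp_ge_add_one_self[of \<delta>] weight_le_1
    by (intro mult_mono power_mono prod_nonneg) (auto simp: add.commute[of 1])
  also have "\<dots> = exp (- \<delta>\<^sup>2 / (1 + \<delta>)) ^ k"
    using \<delta> by (simp add: power_mult_distrib[symmetric] exp_add[symmetric] c_def field_simps power2_eq_square)
  finally show ?thesis
    by (simp add: maj_prob_eq_1_minus_minority)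
qed

lemma CJP_if_eventually_sum_ge:
  fixes \<delta> :: real
  assumes p: "\<And>i. p i \<in> {0..1}" and \<delta>: "\<delta> > 0"
    and ev: "eventually (\<lambda>n. (1/2 + \<delta>) * n \<le> (\<Sum>i<n. p i)) sequentially"
  shows "CJP p"
proof -
  define q where "q = exp (- \<delta>\<^sup>2 / (1 + \<delta>))"
  have "q < 1"
    using \<delta> by (simp add: q_def)
  have "filterlim (\<lambda>k::nat. 2*k+1) sequentially sequentially"
    by (intro filterlim_subseq) (simp add: strict_mono_def)
  then have "eventually (\<lambda>k. (1/2 + \<delta>) * real (2*k+1) \<le> (\<Sum>i<2*k+1. p i)) sequentially"
    by (rule eventually_compose_filterlim[OF ev])
  then have lower: "eventually (\<lambda>k. 1 - q^k \<le> maj_prob p (2*k+1)) sequentially"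
  proof eventually_elim
    case (elim k)
    have "(1 + 2*\<delta>) * k \<le> (1/2 + \<delta>) * real (2*k+1)"
      using \<delta> by (simp add: field_simps)
    then have "(1 + 2*\<delta>) * k \<le> (\<Sum>i<2*k+1. p i)"
      using elim by linarith
    then show ?case
      unfolding q_def by (rule maj_prob_ge[OF p \<delta>])
  qed
  have upper: "eventually (\<lambda>k. maj_prob p (2*k+1) \<le> 1) sequentially"
    using maj_prob_le_1[of p, OF p] by (intro always_eventually allI)
  have "(\<lambda>k. 1 - q^k) \<longlonglongrightarrow> 1 - 0"
    using \<open>q < 1\<close> by (intro tendsto_diff tendsto_const LIMSEQ_power_zero) (simp_all add: q_def)
  then have "(\<lambda>k. 1 - q^k) \<longlonglongrightarrow> 1"
    by simp
  then show ?thesis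
    unfolding CJP_def by (rule tendsto_sandwich[OF lower upper _ tendsto_const])
qed

lemma pm01_space: "pm01 \<nu> \<Longrightarrow> space \<nu> = {0..1}"
proof -
  assume "pm01 \<nu>"
  then have "space \<nu> = space (restrict_space borel {0..1::real})"
    unfolding pm01_def by (intro sets_eq_imp_space_eq) simp
  then show ?thesis
    by (simp add: space_restrict_space)
qed

lemma borel_measurable_pm01_ident: "pm01 \<nu> \<Longrightarrow> (\<lambda>x. x) \<in> borel_measurable \<nu>"
  unfolding pm01_def by (subst measurable_cong_sets[OF _ refl]) (auto intro: measurable_restrict_space1)

lemma
  assumes "sets \<nu>' = sets \<nu>"
  shows sets_sum_meas: "sets (sum_meas \<nu> \<nu>') = sets \<nu>"
    and space_sum_meas: "space (sum_meas \<nu> \<nu>') = space \<nu>"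
    and emeasure_sum_meas: "A \<in> sets \<nu> \<Longrightarrow> emeasure (sum_meas \<nu> \<nu>') A = emeasure \<nu> A + emeasure \<nu>' A"
proof -
  show "sets (sum_meas \<nu> \<nu>') = sets \<nu>" "space (sum_meas \<nu> \<nu>') = space \<nu>"
    by (simp_all add: sum_meas_def)
  have "countably_additive (sets \<nu>) (\<lambda>A. emeasure \<nu> A + emeasure \<nu>' A)"
  proof (rule countably_additiveI)
    fix A :: "nat \<Rightarrow> _"
    assume "range A \<subseteq> sets \<nu>" "disjoint_family A"
    then show "(\<Sum>i. emeasure \<nu> (A i) + emeasure \<nu>' (A i)) = emeasure \<nu> (\<Union>i. A i) + emeasure \<nu>' (\<Union>i. A i)"
      using assms by (simp add: suminf_add[symmetric] suminf_emeasure)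
  qed
  then show "A \<in> sets \<nu> \<Longrightarrow> emeasure (sum_meas \<nu> \<nu>') A = emeasure \<nu> A + emeasure \<nu>' A"
    unfolding sum_meas_def by (intro emeasure_measure_of_sigma sets.sigma_algebra_axioms) (auto simp: positive_def)
qed

lemma pm01_integrable_ident:
  assumes "pm01 \<nu>"
  shows "integrable \<nu> (\<lambda>x. x)"
proof -
  interpret prob_space \<nu>
    using assms by (simp add: pm01_def)
  show ?thesis
    using pm01_space[OF assms] borel_measurable_pm01_ident[OF assms]
    by (intro integrable_const_bound[where B=1] AE_I2) auto
qed

lemma pm01_RN_density:
  fixes \<tau> \<nu> :: "real measure"
  assumes \<nu>: "pm01 \<nu>" and \<tau>: "finite_measure \<tau>" "sets \<nu> = sets \<tau>"
    and ac: "absolutely_continuous \<tau> \<nu>"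
  defines "f \<equiv> \<lambda>x. enn2real (RN_deriv \<tau> \<nu> x)"
  shows "integrable \<tau> f" "(\<integral>x. f x \<partial>\<tau>) = 1"
    and "integrable \<tau> (\<lambda>x. f x * x)" "(\<integral>x. f x * x \<partial>\<tau>) = (\<integral>x. x \<partial>\<nu>)"
proof -
  interpret \<nu>: prob_space \<nu>
    using \<nu> by (simp add: pm01_def)
  interpret \<tau>: finite_measure \<tau>
    by (rule \<tau>)
  have ident: "(\<lambda>x. x) \<in> borel_measurable \<tau>"
    using borel_measurable_pm01_ident[OF \<nu>] by (simp only: measurable_cong_sets[OF \<tau>(2)[symmetric] refl])
  note RN_integrable = \<tau>.RN_deriv_integrable[OF \<nu>.sigma_finite_measure_axioms ac \<tau>(2)]
  note RN_integral = \<tau>.RN_deriv_integral[OF \<nu>.sigma_finite_measure_axioms ac \<tau>(2)]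
  have one: "(\<lambda>_. 1::real) \<in> borel_measurable \<tau>" "integrable \<nu> (\<lambda>_. 1::real)"
    "(\<integral>_. 1 \<partial>\<nu>) = (1::real)"
    by (simp_all add: \<nu>.prob_space)
  show "integrable \<tau> f"
    using RN_integrable[OF one(1)] one(2) unfolding f_def by (simp only: mult_1_right)
  show "(\<integral>x. f x \<partial>\<tau>) = 1"
    using RN_integral[OF one(1)] one(3) unfolding f_def by (simp only: mult_1_right)
  show "integrable \<tau> (\<lambda>x. f x * x)"
    using RN_integrable[OF ident] pm01_integrable_ident[OF \<nu>] unfolding f_def by blast
  show "(\<integral>x. f x * x \<partial>\<tau>) = (\<integral>x. x \<partial>\<nu>)"
    using RN_integral[OF ident] unfolding f_def by (rule sym)
qed

lemma sum_meas_finite_measure: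
  assumes "finite_measure \<nu>" "finite_measure \<nu>'" "sets \<nu>' = sets \<nu>"
  shows "finite_measure (sum_meas \<nu> \<nu>')"
    and "absolutely_continuous (sum_meas \<nu> \<nu>') \<nu>" "absolutely_continuous (sum_meas \<nu> \<nu>') \<nu>'"
proof -
  have "space \<nu>' = space \<nu>"
    using assms(3) by (rule sets_eq_imp_space_eq)
  then have "emeasure (sum_meas \<nu> \<nu>') (space \<nu>) = emeasure \<nu> (space \<nu>) + emeasure \<nu>' (space \<nu>')"
    using emeasure_sum_meas[OF assms(3) sets.top] by simp
  then have "emeasure (sum_meas \<nu> \<nu>') (space \<nu>) \<noteq> \<infinity>"
    using finite_measure.emeasure_finite[OF assms(1)] finite_measure.emeasure_finite[OF assms(2)] by simp
  then show "finite_measure (sum_meas \<nu> \<nu>')"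
    using assms(3) by (intro finite_measureI) (simp add: space_sum_meas)
  show "absolutely_continuous (sum_meas \<nu> \<nu>') \<nu>" "absolutely_continuous (sum_meas \<nu> \<nu>') \<nu>'"
    using assms(3) by (auto simp: absolutely_continuous_def null_sets_def emeasure_sum_meas sets_sum_meas)
qed

lemma abs_sq_diff_le:
  fixes u v e :: real
  assumes e: "e > 0"
  shows "\<bar>u\<^sup>2 - v\<^sup>2\<bar> \<le> e/2 * (u\<^sup>2 + v\<^sup>2) + (u - v)\<^sup>2 / e"
proof -
  have "e * \<bar>u\<^sup>2 - v\<^sup>2\<bar> = (e * \<bar>u + v\<bar>) * \<bar>u - v\<bar>"
    by (simp add: power2_eq_square abs_mult algebra_simps flip: abs_mult)
  also have "\<dots> \<le> (e * \<bar>u + v\<bar>)\<^sup>2 / 4 + (u - v)\<^sup>2"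
  proof -
    have "0 \<le> (e * \<bar>u + v\<bar> / 2 - \<bar>u - v\<bar>)\<^sup>2"
      by simp
    also have "\<dots> = (e * \<bar>u + v\<bar>)\<^sup>2 / 4 - (e * \<bar>u + v\<bar>) * \<bar>u - v\<bar> + (u - v)\<^sup>2"
      by (simp add: power2_diff power_divide)
    finally show ?thesis
      by linarith
  qed
  also have "\<dots> \<le> e\<^sup>2 * (u\<^sup>2 + v\<^sup>2) / 2 + (u - v)\<^sup>2"
  proof -
    have "(u + v)\<^sup>2 \<le> 2 * (u\<^sup>2 + v\<^sup>2)"
      using zero_le_power2[of "u - v"] by (simp add: power2_sum power2_diff)
    then have "e\<^sup>2 * (u + v)\<^sup>2 \<le> e\<^sup>2 * (2 * (u\<^sup>2 + v\<^sup>2))"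
      by (rule mult_left_mono) simp
    then show ?thesis
      by (simp add: power_mult_distrib algebra_simps)
  qed
  finally show ?thesis
    using e by (simp add: field_simps power2_eq_square)
qed

lemma hellinger_pointwise_bound:
  fixes f g x e :: real
  assumes "0 \<le> f" "0 \<le> g" "0 \<le> x" "x \<le> 1" "e > 0"
  shows "g * x + 2/e * sqrt (f * g) \<le> f * x + (e/2 + 1/e) * (f + g)"
proof -
  have "\<bar>f - g\<bar> \<le> e/2 * (f + g) + (f + g - 2 * sqrt (f * g)) / e"
    using abs_sq_diff_le[OF \<open>e > 0\<close>, of "sqrt f" "sqrt g"] assms(1,2)
    by (simp add: power2_diff real_sqrt_mult mult.assoc)
  also have "\<dots> = (e/2 + 1/e) * (f + g) - 2/e * sqrt (f * g)"
    by (simp add: diff_divide_distrib distrib_right)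
  moreover have "(g - f) * x \<le> \<bar>g - f\<bar> * 1"
    using assms(3,4) by (intro mult_mono) auto
  then have "g * x \<le> f * x + \<bar>f - g\<bar>"
    by (simp add: left_diff_distrib abs_minus_commute)
  ultimately show ?thesis
    by linarith
qed

lemma integrable_sqrt_mult:
  fixes f g :: "'a \<Rightarrow> real"
  assumes "integrable M f" "integrable M g" "\<And>x. 0 \<le> f x" "\<And>x. 0 \<le> g x"
  shows "integrable M (\<lambda>x. sqrt (f x * g x))"
proof (rule Bochner_Integration.integrable_bound)
  show "integrable M (\<lambda>x. f x + g x)"
    using assms(1,2) by (rule Bochner_Integration.integrable_add)
  show "AE x in M. norm (sqrt (f x * g x)) \<le> norm (f x + g x)"
  proof (rule AE_I2)
    fix x
    have "f x * g x \<le> (f x + g x)\<^sup>2"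
      unfolding power2_eq_square using assms(3,4)[of x] by (intro mult_mono) auto
    then have "sqrt (f x * g x) \<le> f x + g x"
      using assms(3,4)[of x] by (intro real_le_lsqrt) auto
    then show "norm (sqrt (f x * g x)) \<le> norm (f x + g x)"
      using assms(3,4)[of x] by simp
  qed
qed (use assms(1,2) in \<open>simp_all add: borel_measurable_integrable\<close>)

lemma hellinger_mean_bound:
  fixes e :: real
  assumes \<nu>: "pm01 \<nu>" and \<nu>': "pm01 \<nu>'" and e: "e > 0"
  shows "hellinger \<nu> \<nu>' \<noteq> \<infinity>"
    and "(\<integral>x. x \<partial>\<nu>') - (\<integral>x. x \<partial>\<nu>) \<le> e + 2/e * (1 - enn2real (hellinger \<nu> \<nu>'))"
proof -
  define \<tau> where "\<tau> = sum_meas \<nu> \<nu>'"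
  define f where "f x = enn2real (RN_deriv \<tau> \<nu> x)" for x
  define g where "g x = enn2real (RN_deriv \<tau> \<nu>' x)" for x
  have sets: "sets \<nu>' = sets \<nu>" "sets \<nu> = sets \<tau>" "sets \<nu>' = sets \<tau>"
    using \<nu> \<nu>' by (simp_all add: pm01_def \<tau>_def sets_sum_meas)
  have fin: "finite_measure \<nu>" "finite_measure \<nu>'"
    using \<nu> \<nu>' by (simp_all add: pm01_def prob_space.finite_measure)
  note \<tau> = sum_meas_finite_measure[OF fin sets(1), folded \<tau>_def]
  note f = pm01_RN_density[OF \<nu> \<tau>(1) sets(2) \<tau>(2), folded f_def]
  note g = pm01_RN_density[OF \<nu>' \<tau>(1) sets(3) \<tau>(3), folded g_def]
  have space: "space \<tau> = {0..1}"
    using pm01_space[OF \<nu>] sets_eq_imp_space_eq[OF sets(2)] by simp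
  have fg_nonneg: "0 \<le> f x" "0 \<le> g x" for x
    by (simp_all add: f_def g_def)
  have "integrable \<tau> (\<lambda>x. sqrt (f x * g x))"
    using f(1) g(1) fg_nonneg by (rule integrable_sqrt_mult)
  then have H: "hellinger \<nu> \<nu>' = ennreal (\<integral>x. sqrt (f x * g x) \<partial>\<tau>)"
    unfolding hellinger_def Let_def \<tau>_def[symmetric] f_def[symmetric] g_def[symmetric]
    using fg_nonneg by (intro nn_integral_eq_integral AE_I2) simp_all
  then show "hellinger \<nu> \<nu>' \<noteq> \<infinity>"
    by simp
  have "(\<integral>x. g x * x + 2/e * sqrt (f x * g x) \<partial>\<tau>) \<le> (\<integral>x. f x * x + (e/2 + 1/e) * (f x + g x) \<partial>\<tau>)"
    using f g e fg_nonneg \<open>integrable \<tau> (\<lambda>x. sqrt (f x * g x))\<close>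
    by (intro integral_mono hellinger_pointwise_bound) (auto simp: space)
  then have "(\<integral>x. x \<partial>\<nu>') + 2/e * (\<integral>x. sqrt (f x * g x) \<partial>\<tau>) \<le> (\<integral>x. x \<partial>\<nu>) + (e/2 + 1/e) * 2"
    using f g \<open>integrable \<tau> (\<lambda>x. sqrt (f x * g x))\<close> by simp
  moreover have "enn2real (hellinger \<nu> \<nu>') = (\<integral>x. sqrt (f x * g x) \<partial>\<tau>)"
    using fg_nonneg by (simp add: H integral_nonneg)
  moreover have "(e/2 + 1/e) * 2 = e + 2/e"
    by simp
  ultimately show "(\<integral>x. x \<partial>\<nu>') - (\<integral>x. x \<partial>\<nu>) \<le> e + 2/e * (1 - enn2real (hellinger \<nu> \<nu>'))"
    by (simp add: right_diff_distrib)
qed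

lemma product_prob_space_pm01: "(\<And>i. pm01 (\<nu> i)) \<Longrightarrow> product_prob_space \<nu>"
  by (intro product_prob_spaceI) (simp add: pm01_def)

lemma space_PiM_pm01: "(\<And>i. pm01 (\<nu> i)) \<Longrightarrow> space (\<Pi>\<^sub>M i\<in>UNIV. \<nu> i) = (\<Pi>\<^sub>E i\<in>UNIV. {0..1})"
  by (simp add: space_PiM pm01_space)

lemma measurable_coord_pm01:
  assumes "\<And>i. pm01 (\<nu> i)"
  shows "(\<lambda>x. x i) \<in> borel_measurable (\<Pi>\<^sub>M i\<in>UNIV. \<nu> i)"
  using measurable_compose[OF measurable_component_singleton[of i UNIV \<nu>] borel_measurable_pm01_ident[OF assms]]
  by simp

lemma (in product_prob_space) indep_vars_coord:
  assumes "finite J" "J \<subseteq> I" "J \<noteq> {}"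
  shows "indep_vars M (\<lambda>i x. x i) J"
proof (subst indep_vars_iff_distr_eq_PiM')
  show "random_variable (M i) (\<lambda>x. x i)" if "i \<in> J" for i
    using that assms(2) by (intro measurable_component_singleton) auto
  have "distr (PiM I M) (PiM J M) (\<lambda>x. \<lambda>i\<in>J. x i) = PiM J M"
    using distr_PiM_restrict_finite[OF assms(1,2)] by (simp add: restrict_def)
  also have "\<dots> = (\<Pi>\<^sub>M i\<in>J. distr (PiM I M) (M i) (\<lambda>x. x i))"
    using assms(2) by (intro PiM_cong refl) (auto simp: PiM_component)
  finally show "distr (PiM I M) (PiM J M) (\<lambda>x. \<lambda>i\<in>J. x i) = (\<Pi>\<^sub>M i\<in>J. distr (PiM I M) (M i) (\<lambda>x. x i))" .
qed (use assms(3) in simp)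

lemma prob_sum_coord_le_Hoeffding:
  fixes \<nu> :: "nat \<Rightarrow> real measure" and t :: real
  assumes pm: "\<And>i. pm01 (\<nu> i)" and t: "t \<ge> 0"
  shows "measure (\<Pi>\<^sub>M i\<in>UNIV. \<nu> i)
      {x \<in> space (\<Pi>\<^sub>M i\<in>UNIV. \<nu> i). (\<Sum>i<n. x i) \<le> (\<Sum>i<n. \<integral>y. y \<partial>\<nu> i) - n * t}
    \<le> exp (-2 * t\<^sup>2) ^ n"
proof -
  let ?M = "\<Pi>\<^sub>M i\<in>UNIV. \<nu> i"
  interpret P: product_prob_space \<nu> UNIV
    using pm by (rule product_prob_space_pm01)
  show ?thesis
  proof (cases "n = 0")
    case True
    then show ?thesis
      by (simp add: P.prob_le_1)
  next
    case False
    have indep: "P.indep_vars (\<lambda>_. borel) (\<lambda>i x. x i) {..<n}"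
      using P.indep_vars_compose2[OF P.indep_vars_coord, of "{..<n}" "\<lambda>_ x. x" "\<lambda>_. borel"]
        borel_measurable_pm01_ident pm False by (simp add: lessThan_empty_iff)
    have expectation: "P.expectation (\<lambda>x. x i) = (\<integral>y. y \<partial>\<nu> i)" for i
      using integral_distr[OF measurable_component_singleton[of i UNIV \<nu>] borel_measurable_pm01_ident[OF pm]]
      by (simp add: P.PiM_component)
    interpret Hoeffding_ineq ?M "{..<n}" "\<lambda>i x. x i" "\<lambda>_. 0" "\<lambda>_. 1" "\<Sum>i<n. \<integral>y. y \<partial>\<nu> i"
    proof unfold_locales
      show "AE x in ?M. x i \<in> {0..1}" for i
        using space_PiM_pm01[of \<nu>, OF pm] by (intro AE_I2) auto
      show "(\<Sum>i<n. \<integral>y. y \<partial>\<nu> i) \<equiv> (\<Sum>i<n. P.expectation (\<lambda>x. x i))"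
        by (simp add: expectation)
    qed (simp_all add: indep)
    have "P.prob {x \<in> space ?M. (\<Sum>i<n. x i) \<le> (\<Sum>i<n. \<integral>y. y \<partial>\<nu> i) - n * t}
        \<le> exp (-2 * (n * t)\<^sup>2 / (\<Sum>i<n. (1 - 0)\<^sup>2))"
      using t False by (intro Hoeffding_ineq_le) auto
    also have "\<dots> = exp (-2 * t\<^sup>2) ^ n"
      using False by (simp add: power2_eq_square exp_of_nat_mult[symmetric] algebra_simps)
    finally show ?thesis .
  qed
qed

lemma AE_eventually_sum_coord_gt:
  fixes \<nu> :: "nat \<Rightarrow> real measure" and t :: real
  assumes pm: "\<And>i. pm01 (\<nu> i)" and t: "t > 0"
  shows "AE x in (\<Pi>\<^sub>M i\<in>UNIV. \<nu> i).
    eventually (\<lambda>n. (\<Sum>i<n. \<integral>y. y \<partial>\<nu> i) - n * t < (\<Sum>i<n. x i)) sequentially"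
proof -
  let ?M = "\<Pi>\<^sub>M i\<in>UNIV. \<nu> i"
  interpret P: product_prob_space \<nu> UNIV
    using pm by (rule product_prob_space_pm01)
  define A where "A n = {x \<in> space ?M. (\<Sum>i<n. x i) \<le> (\<Sum>i<n. \<integral>y. y \<partial>\<nu> i) - n * t}" for n
  have [measurable]: "(\<lambda>x. x i) \<in> borel_measurable ?M" for i
    using pm by (rule measurable_coord_pm01)
  have "summable (\<lambda>n. measure ?M (A n))"
    using prob_sum_coord_le_Hoeffding[of \<nu> t, OF pm] t
    by (intro summable_comparison_test[OF _ summable_geometric[of "exp (-2 * t\<^sup>2)"]])
       (auto simp: A_def)
  then have "AE x in ?M. eventually (\<lambda>n. x \<in> space ?M - A n) sequentially"
    by (intro borel_cantelli_AE1) (auto simp: A_def P.emeasure_finite less_top[symmetric])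
  then show ?thesis
    by (rule AE_mp) (auto intro!: AE_I2 elim!: eventually_mono simp: A_def)
qed

lemma AE_CJP_if_eventually_sum_means_ge:
  fixes \<nu> :: "nat \<Rightarrow> real measure" and \<delta> :: real
  assumes pm: "\<And>i. pm01 (\<nu> i)" and \<delta>: "\<delta> > 0"
    and means: "eventually (\<lambda>n. (1/2 + \<delta>) * n \<le> (\<Sum>i<n. \<integral>y. y \<partial>\<nu> i)) sequentially"
  shows "AE x in (\<Pi>\<^sub>M i\<in>UNIV. \<nu> i). CJP x"
proof -
  have "AE x in (\<Pi>\<^sub>M i\<in>UNIV. \<nu> i).
      eventually (\<lambda>n. (\<Sum>i<n. \<integral>y. y \<partial>\<nu> i) - n * (\<delta>/2) < (\<Sum>i<n. x i)) sequentially"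
    using pm \<delta> by (intro AE_eventually_sum_coord_gt) auto
  with AE_space show ?thesis
  proof eventually_elim
    case (elim x)
    then have "\<And>i. x i \<in> {0..1}"
      using space_PiM_pm01[of \<nu>, OF pm] by auto
    moreover have "eventually (\<lambda>n. (1/2 + \<delta>/2) * n \<le> (\<Sum>i<n. x i)) sequentially"
      using elim(2) means by eventually_elim (simp add: algebra_simps)
    ultimately show "CJP x"
      using \<delta> by (intro CJP_if_eventually_sum_ge[of x "\<delta>/2"]) auto
  qed
qed

lemma C_I_eq_Collect_CJP:
  assumes "\<And>i. pm01 (\<nu> i)"
  shows "C_I = {x \<in> space (\<Pi>\<^sub>M i\<in>UNIV. \<nu> i). CJP x}"
  using space_PiM_pm01[of \<nu>, OF assms] by (auto simp: C_I_def)

lemma sets_C_I: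
  assumes pm: "\<And>i. pm01 (\<nu> i)"
  shows "C_I \<in> sets (\<Pi>\<^sub>M i\<in>UNIV. \<nu> i)"
proof -
  have [measurable]: "(\<lambda>x. x i) \<in> borel_measurable (\<Pi>\<^sub>M i\<in>UNIV. \<nu> i)" for i
    using pm by (rule measurable_coord_pm01)
  show ?thesis
    unfolding C_I_eq_Collect_CJP[of \<nu>, OF pm] CJP_def maj_prob_def by measurable
qed

lemma class_D_mean_bound:
  assumes "class_D d"
  obtains C where "C > 0"
    and "\<And>\<nu> \<nu>' e. pm01 \<nu> \<Longrightarrow> pm01 \<nu>' \<Longrightarrow> e > 0 \<Longrightarrow> d \<nu> \<nu>' \<noteq> \<infinity> \<Longrightarrow>
      (\<integral>x. x \<partial>\<nu>') - (\<integral>x. x \<partial>\<nu>) \<le> e + 2 * C / e * enn2real (d \<nu> \<nu>')"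
proof -
  obtain C :: real where C: "C > 0"
    and hellinger_le: "\<And>\<nu> \<nu>'. pm01 \<nu> \<Longrightarrow> pm01 \<nu>' \<Longrightarrow> 1 - hellinger \<nu> \<nu>' \<le> ennreal C * d \<nu> \<nu>'"
    using assms unfolding class_D_def by (elim conjE exE) blast
  have "(\<integral>x. x \<partial>\<nu>') - (\<integral>x. x \<partial>\<nu>) \<le> e + 2 * C / e * enn2real (d \<nu> \<nu>')"
    if \<nu>: "pm01 \<nu>" "pm01 \<nu>'" and e: "e > 0" and d: "d \<nu> \<nu>' \<noteq> \<infinity>" for \<nu> \<nu>' e
  proof -
    define h where "h = enn2real (hellinger \<nu> \<nu>')"
    have H: "hellinger \<nu> \<nu>' = ennreal h" "0 \<le> h"
      using hellinger_mean_bound(1)[OF \<nu> e] by (simp_all add: h_def ennreal_enn2real_if)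
    have Cd_nonneg: "0 \<le> C * enn2real (d \<nu> \<nu>')"
      using C by simp
    have "1 - h \<le> C * enn2real (d \<nu> \<nu>')"
    proof (cases "h \<le> 1")
      case True
      have "ennreal (1 - h) = ennreal 1 - ennreal h"
        using H(2) by (rule ennreal_minus[symmetric])
      also have "\<dots> = 1 - hellinger \<nu> \<nu>'"
        using H(1) by simp
      also have "\<dots> \<le> ennreal C * d \<nu> \<nu>'"
        using \<nu> by (rule hellinger_le)
      also have "\<dots> = ennreal (C * enn2real (d \<nu> \<nu>'))"
        using C d by (simp add: ennreal_mult ennreal_enn2real_if)
      finally show ?thesis
        using ennreal_le_iff[OF Cd_nonneg] by blast
    next
      case False
      then show ?thesis
        using Cd_nonneg by linarith
    qed
    then have "2/e * (1 - h) \<le> 2/e * (C * enn2real (d \<nu> \<nu>'))"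
      using e by (intro mult_left_mono) auto
    moreover have "2/e * (C * enn2real (d \<nu> \<nu>')) = 2 * C / e * enn2real (d \<nu> \<nu>')"
      by simp
    ultimately show ?thesis
      using hellinger_mean_bound(2)[OF \<nu> e] unfolding h_def by linarith
  qed
  with C show ?thesis
    by (rule that)
qed

lemma eventually_ge_linear:
  fixes s :: "nat \<Rightarrow> real" and c \<epsilon> K :: real
  assumes "\<epsilon> > 0" and "\<And>n. (c + \<epsilon>) * n - K \<le> s n"
  shows "eventually (\<lambda>n. c * n \<le> s n) sequentially"
proof -
  obtain N :: nat where "K / \<epsilon> \<le> N"
    using real_arch_simple by blast
  have "c * n \<le> s n" if "n \<ge> N" for n
  proof -
    have "K / \<epsilon> \<le> n"
      using \<open>K / \<epsilon> \<le> N\<close> that by (meson of_nat_le_iff order_trans)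
    then have "K \<le> \<epsilon> * n"
      using \<open>\<epsilon> > 0\<close> by (simp add: field_simps)
    then show ?thesis
      using assms(2)[of n] by (simp add: algebra_simps)
  qed
  then show ?thesis
    unfolding eventually_sequentially by blast
qed

lemma b_biased_eventually_sum_means_ge:
  assumes "b_biased \<nu> b" and b: "b > 0"
  shows "eventually (\<lambda>n. (1/2 + b/2) * n \<le> (\<Sum>i<n. \<integral>x. x \<partial>\<nu> i)) sequentially"
proof -
  obtain \<nu>0 d where pm: "\<And>i. pm01 (\<nu> i)" and pm0: "pm01 \<nu>0" and mean0: "(\<integral>x. x \<partial>\<nu>0) = 1/2 + b"
    and "class_D d" and d_summable: "(\<Sum>i. d (\<nu> i) \<nu>0) < \<infinity>"
    using assms(1) unfolding b_biased_def by (elim conjE exE) blast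
  obtain C where "C > 0" and mean_bound: "\<And>\<nu> \<nu>' e. pm01 \<nu> \<Longrightarrow> pm01 \<nu>' \<Longrightarrow> e > 0 \<Longrightarrow> d \<nu> \<nu>' \<noteq> \<infinity> \<Longrightarrow>
      (\<integral>x. x \<partial>\<nu>') - (\<integral>x. x \<partial>\<nu>) \<le> e + 2 * C / e * enn2real (d \<nu> \<nu>')"
    using class_D_mean_bound[OF \<open>class_D d\<close>] by blast
  define r where "r i = enn2real (d (\<nu> i) \<nu>0)" for i
  define K where "K = 8 * C / b * suminf r"
  have d_finite: "d (\<nu> i) \<nu>0 \<noteq> \<infinity>" for i
    using ennreal_suminf_lessD[OF d_summable[unfolded infinity_ennreal_def]] by (simp add: less_top)
  then have "(\<Sum>i. ennreal (r i)) = (\<Sum>i. d (\<nu> i) \<nu>0)"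
    by (simp add: r_def ennreal_enn2real_if)
  then have "summable r"
    using d_summable by (intro summable_suminf_not_top) (simp_all add: r_def)
  have mean_ge: "1/2 + b/2 + b/4 - 8 * C / b * r i \<le> (\<integral>x. x \<partial>\<nu> i)" for i
    using mean_bound[OF pm pm0, of "b/4" i] b d_finite mean0 by (simp add: r_def)
  have sum_ge: "(1/2 + b/2 + b/4) * n - K \<le> (\<Sum>i<n. \<integral>x. x \<partial>\<nu> i)" for n
  proof -
    have "(\<Sum>i<n. r i) \<le> suminf r"
      by (rule sum_le_suminf[OF \<open>summable r\<close>]) (simp_all add: r_def)
    then have "8 * C / b * (\<Sum>i<n. r i) \<le> K"
      unfolding K_def using \<open>C > 0\<close> b by (intro mult_left_mono) auto
    moreover have "(\<Sum>i<n. 1/2 + b/2 + b/4 - 8 * C / b * r i) \<le> (\<Sum>i<n. \<integral>x. x \<partial>\<nu> i)"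
      by (intro sum_mono mean_ge)
    moreover have "(\<Sum>i<n. 1/2 + b/2 + b/4 - 8 * C / b * r i) = (1/2 + b/2 + b/4) * n - 8 * C / b * (\<Sum>i<n. r i)"
      by (simp add: sum_subtractf sum_distrib_left)
    ultimately show ?thesis
      by linarith
  qed
  have "b/4 > 0"
    using b by simp
  then show ?thesis
    using sum_ge by (rule eventually_ge_linear)
qed

theorem theorem2:
  fixes \<nu> :: "nat \<Rightarrow> real measure" and b :: real
  assumes "b_biased \<nu> b" and "b > 0"
  shows "C_I \<in> sets (\<Pi>\<^sub>M i\<in>UNIV. \<nu> i) \<and> emeasure (\<Pi>\<^sub>M i\<in>UNIV. \<nu> i) C_I = 1"
proof -
  have pm: "\<And>i. pm01 (\<nu> i)"
    using assms(1) by (simp add: b_biased_def)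
  interpret product_prob_space \<nu> UNIV
    using pm by (rule product_prob_space_pm01)
  have "AE x in (\<Pi>\<^sub>M i\<in>UNIV. \<nu> i). CJP x"
    using pm \<open>b > 0\<close> b_biased_eventually_sum_means_ge[OF assms]
    by (intro AE_CJP_if_eventually_sum_means_ge[of \<nu> "b/2"]) auto
  then have "AE x in (\<Pi>\<^sub>M i\<in>UNIV. \<nu> i). x \<in> C_I"
    by (rule AE_mp) (simp add: C_I_eq_Collect_CJP[of \<nu>, OF pm])
  then show ?thesis
    using sets_C_I[of \<nu>, OF pm] by (simp add: emeasure_eq_1_AE)
qed

end
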